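(* Let $n\ge 2$ and $1\le r\le n$. Then for every vertex $v\in V(P_n^* )$, $$|\mathcal{I}^{(r)}_v(P_n^* )|\le |\mathcal{I}^{(r)}_{p_2}(P_n^* )| = |\mathcal{I}^{(r)}_{p_{n-1}}(P_n^* )|,$$ i.e. the $r$-stars centred at the pendant vertices $p_2$ and $p_{n-1}$ are $r$-stars of maximum size in $P_n^*$.
   Context: An independent $r$-set of a graph $G$ is a set of $r$ pairwise non-adjacent vertices; $\mathcal{I}^{(r)}(G)$ is the family of independent $r$-sets of $G$, and $\mathcal{I}^{(r)}_v(G)$ the subfamily of those containing $v$ (the $r$-star centred at $v$). For a graph $G$ with vertices $x_1,\dots,x_n$, the pendant graph $G^*$ has vertex set $\{x_1,\dots,x_n\}\sqcup\{p_1,\dots,p_n\}$ and edge set $E(G)\sqcup\{x_1p_1,\dots,x_np_n\}$. $P_n$ is the path with vertices $x_1,\dots,x_n$ and edges $x_ix_{i+1}$, $1\le i\le n-1$, and $P_n^*$ is its pendant graph. *)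

theory Defs
  imports Main
begin

text \<open>A (finite simple) graph is given by a vertex set V and a symmetric irreflexive
  adjacency relation E.\<close>

definition independent_rsets :: "'a set \<Rightarrow> ('a \<Rightarrow> 'a \<Rightarrow> bool) \<Rightarrow> nat \<Rightarrow> 'a set set" where
  "independent_rsets V E r =
     {A. A \<subseteq> V \<and> card A = r \<and> finite A \<and> (\<forall>x\<in>A. \<forall>y\<in>A. \<not> E x y)}"

definition independent_rstar :: "'a set \<Rightarrow> ('a \<Rightarrow> 'a \<Rightarrow> bool) \<Rightarrow> nat \<Rightarrow> 'a \<Rightarrow> 'a set set" where
  "independent_rstar V E r v = {A \<in> independent_rsets V E r. v \<in> A}"

text \<open>Vertices of the pendant graph: original vertices x_i and pendant vertices p_i.\<close>
datatype 'a pvert = X 'a | P 'a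

definition pendant_vertices :: "'a set \<Rightarrow> 'a pvert set" where
  "pendant_vertices V = X ` V \<union> P ` V"

fun pendant_adj :: "('a \<Rightarrow> 'a \<Rightarrow> bool) \<Rightarrow> 'a pvert \<Rightarrow> 'a pvert \<Rightarrow> bool" where
  "pendant_adj E (X a) (X b) = E a b"
| "pendant_adj E (X a) (P b) = (a = b)"
| "pendant_adj E (P a) (X b) = (a = b)"
| "pendant_adj E (P a) (P b) = False"

definition path_vertices :: "nat \<Rightarrow> nat set" where
  "path_vertices n = {1..n}"

definition path_adj :: "nat \<Rightarrow> nat \<Rightarrow> bool" where
  "path_adj i j = (j = i + 1 \<or> i = j + 1)"

end

theory Submission imports Defs begin

text \<open>Every pendant vertex is better than its neighbour: replacing x_i by p_i maps the
  star at x_i injectively into the star at p_i. Among pendant vertices, the stars are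
  compared by relabelling the path by reversals of subintervals [a..b], which only break
  the two boundary edges x_(a-1)x_a and x_bx_(b+1) and create x_(a-1)x_b and x_ax_(b+1).
  Reversing [1..n] gives the symmetry p_2 \<leftrightarrow> p_(n-1), reversing [1..2] gives
  p_1 \<le> p_2, and for i \<ge> 2 reversing [2..i] moves p_i to p_2 unless the set contains
  both x_2 and x_(i+1), in which case reversing [1..i+1] does; the two kinds of images are
  told apart by whether they contain both x_1 and x_i.\<close>

lemma independent_rstar_nonadjacent:
  "A \<in> independent_rstar V E r v \<Longrightarrow> x \<in> A \<Longrightarrow> y \<in> A \<Longrightarrow> \<not> E x y"
  by (simp add: independent_rstar_def independent_rsets_def)

lemma independent_rstar_subset:
  "A \<in> independent_rstar V E r v \<Longrightarrow> A \<subseteq> V"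
  by (simp add: independent_rstar_def independent_rsets_def)

lemma finite_independent_rstar: "finite V \<Longrightarrow> finite (independent_rstar V E r v)"
  by (rule finite_subset[of _ "Pow V"]) (auto dest: independent_rstar_subset)

lemma card_independent_rstar_le_inj:
  assumes "finite V'"
    and "inj_on F (independent_rstar V E r v)"
    and "F ` independent_rstar V E r v \<subseteq> independent_rstar V' E' r w"
  shows "card (independent_rstar V E r v) \<le> card (independent_rstar V' E' r w)"
  using card_inj_on_le[OF assms(2,3) finite_independent_rstar[OF assms(1)]] .

lemma pendant_vertices_iff [simp]:
  "X a \<in> pendant_vertices V \<longleftrightarrow> a \<in> V"
  "P a \<in> pendant_vertices V \<longleftrightarrow> a \<in> V"
  by (auto simp: pendant_vertices_def)

lemma finite_pendant_vertices: "finite V \<Longrightarrow> finite (pendant_vertices V)"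
  by (simp add: pendant_vertices_def)

lemma card_independent_rstar_X_le_P:
  assumes "finite V"
  shows "card (independent_rstar (pendant_vertices V) (pendant_adj E) r (X a))
       \<le> card (independent_rstar (pendant_vertices V) (pendant_adj E) r (P a))"
proof (rule card_independent_rstar_le_inj[where F = "\<lambda>A. insert (P a) (A - {X a})"])
  let ?S = "independent_rstar (pendant_vertices V) (pendant_adj E) r (X a)"
  have P_notin: "P a \<notin> A" if "A \<in> ?S" for A
    using independent_rstar_nonadjacent[OF that] that by (force simp: independent_rstar_def)
  show "finite (pendant_vertices V)"
    using assms by (rule finite_pendant_vertices)
  show "inj_on (\<lambda>A. insert (P a) (A - {X a})) ?S"
  proof (rule inj_onI)
    fix A B assume A: "A \<in> ?S" and B: "B \<in> ?S"
      and eq: "insert (P a) (A - {X a}) = insert (P a) (B - {X a})"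
    have "C = insert (X a) (insert (P a) (C - {X a}) - {P a})" if "C \<in> ?S" for C
      using P_notin[OF that] that by (auto simp: independent_rstar_def)
    from this[OF A] this[OF B] eq show "A = B" by simp
  qed
  show "(\<lambda>A. insert (P a) (A - {X a})) ` ?S
      \<subseteq> independent_rstar (pendant_vertices V) (pendant_adj E) r (P a)"
  proof clarify
    fix A assume A: "A \<in> ?S"
    then have "X a \<in> A" "finite A" "A \<subseteq> pendant_vertices V"
      by (auto simp: independent_rstar_def independent_rsets_def)
    have "card (insert (P a) (A - {X a})) = Suc (card (A - {X a}))"
      using P_notin[OF A] \<open>finite A\<close> by (intro card_insert_disjoint) auto
    also have "\<dots> = card A"
      using \<open>finite A\<close> \<open>X a \<in> A\<close> by (rule card_Suc_Diff1)
    finally have "card (insert (P a) (A - {X a})) = card A" .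
    moreover have "\<not> pendant_adj E u w" if u: "u \<in> insert (P a) (A - {X a})"
      and w: "w \<in> insert (P a) (A - {X a})" for u w
    proof -
      consider "u = P a" "w = P a" | "u = P a" "w \<in> A" "w \<noteq> X a"
        | "u \<in> A" "u \<noteq> X a" "w = P a" | "u \<in> A" "w \<in> A"
        using u w by auto
      then show ?thesis
      proof cases
        case 2
        then show ?thesis by (cases w) auto
      next
        case 3
        then show ?thesis by (cases u) auto
      qed (simp_all add: independent_rstar_nonadjacent[OF A])
    qed
    ultimately show "insert (P a) (A - {X a})
        \<in> independent_rstar (pendant_vertices V) (pendant_adj E) r (P a)"
      using A \<open>X a \<in> A\<close> \<open>A \<subseteq> pendant_vertices V\<close>
      by (auto simp: independent_rstar_def independent_rsets_def)
  qed
qed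

lemma map_pvert_independent_rsets:
  assumes A: "A \<in> independent_rsets (pendant_vertices V) (pendant_adj E) r"
    and "inj \<pi>" and "\<pi> ` V \<subseteq> W"
    and adj: "\<And>a b. X a \<in> A \<Longrightarrow> X b \<in> A \<Longrightarrow> E' (\<pi> a) (\<pi> b) \<Longrightarrow> E a b"
  shows "map_pvert \<pi> ` A \<in> independent_rsets (pendant_vertices W) (pendant_adj E') r"
proof -
  have sub: "A \<subseteq> pendant_vertices V" and indep: "\<And>u w. u \<in> A \<Longrightarrow> w \<in> A \<Longrightarrow> \<not> pendant_adj E u w"
    using A by (auto simp: independent_rsets_def)
  have "map_pvert \<pi> u \<in> pendant_vertices W" if "u \<in> A" for u
    using subsetD[OF sub that] \<open>\<pi> ` V \<subseteq> W\<close> by (cases u) auto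
  moreover have "\<not> pendant_adj E' (map_pvert \<pi> u) (map_pvert \<pi> w)" if "u \<in> A" "w \<in> A" for u w
    using that indep[OF that] adj \<open>inj \<pi>\<close> by (cases u; cases w) (auto simp: inj_eq)
  moreover have "card (map_pvert \<pi> ` A) = card A"
    using \<open>inj \<pi>\<close> by (simp add: card_image inj_on_subset[OF pvert.inj_map])
  ultimately show ?thesis
    using A by (auto simp: independent_rsets_def)
qed

definition rev_interval :: "nat \<Rightarrow> nat \<Rightarrow> nat \<Rightarrow> nat" where
  "rev_interval a b j = (if a \<le> j \<and> j \<le> b then a + b - j else j)"

lemma rev_interval_rev_interval [simp]: "rev_interval a b (rev_interval a b j) = j"
  by (auto simp: rev_interval_def)

lemma inj_rev_interval: "inj (rev_interval a b)"
  by (metis injI rev_interval_rev_interval)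

lemma rev_interval_image_subset: "1 \<le> a \<Longrightarrow> b \<le> n \<Longrightarrow> rev_interval a b ` {1..n} \<subseteq> {1..n}"
  by (auto simp: rev_interval_def)

lemma path_adj_rev_interval:
  "path_adj (rev_interval a b x) (rev_interval a b y) \<Longrightarrow>
     path_adj x y \<or> {x, y} = {a - 1, b} \<or> {x, y} = {a, b + 1}"
  unfolding rev_interval_def path_adj_def by (auto split: if_splits)

abbreviation path_pendant_rstar :: "nat \<Rightarrow> nat \<Rightarrow> nat pvert \<Rightarrow> nat pvert set set" where
  "path_pendant_rstar n r v \<equiv>
     independent_rstar (pendant_vertices (path_vertices n)) (pendant_adj path_adj) r v"

lemma path_pendant_rstar_X_range:
  "A \<in> path_pendant_rstar n r v \<Longrightarrow> X j \<in> A \<Longrightarrow> 1 \<le> j \<and> j \<le> n"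
  by (auto dest!: independent_rstar_subset simp: path_vertices_def)

lemma path_pendant_rstar_P_excludes_X:
  assumes A: "A \<in> path_pendant_rstar n r (P i)"
  shows "X i \<notin> A"
proof
  assume "X i \<in> A"
  moreover have "P i \<in> A"
    using A by (simp add: independent_rstar_def)
  ultimately show False
    using independent_rstar_nonadjacent[OF A] by fastforce
qed

lemma path_pendant_rstar_consecutive:
  "A \<in> path_pendant_rstar n r v \<Longrightarrow> X j \<in> A \<Longrightarrow> X (j + 1) \<notin> A"
  by (metis independent_rstar_nonadjacent pendant_adj.simps(1) path_adj_def)

lemma rev_interval_image_path_pendant_rstar:
  assumes A: "A \<in> path_pendant_rstar n r v" and "1 \<le> a" "b \<le> n"
    and left: "\<not> (X (a - 1) \<in> A \<and> X b \<in> A)"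
    and right: "\<not> (X a \<in> A \<and> X (b + 1) \<in> A)"
  shows "map_pvert (rev_interval a b) ` A \<in> path_pendant_rstar n r (map_pvert (rev_interval a b) v)"
proof -
  have "map_pvert (rev_interval a b) ` A
      \<in> independent_rsets (pendant_vertices (path_vertices n)) (pendant_adj path_adj) r"
  proof (rule map_pvert_independent_rsets)
    show "A \<in> independent_rsets (pendant_vertices (path_vertices n)) (pendant_adj path_adj) r"
      using A by (simp add: independent_rstar_def)
    show "rev_interval a b ` path_vertices n \<subseteq> path_vertices n"
      using rev_interval_image_subset \<open>1 \<le> a\<close> \<open>b \<le> n\<close> by (simp add: path_vertices_def)
    show "path_adj x y"
      if "X x \<in> A" "X y \<in> A" "path_adj (rev_interval a b x) (rev_interval a b y)" for x y
      using path_adj_rev_interval[OF that(3)] that(1,2) left right by (auto simp: doubleton_eq_iff)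
  qed (rule inj_rev_interval)
  then show ?thesis
    using A by (auto simp: independent_rstar_def)
qed

lemma card_path_pendant_rstar_le_rev_interval:
  assumes "1 \<le> a" "b \<le> n"
    and "\<And>A. A \<in> path_pendant_rstar n r v \<Longrightarrow>
           \<not> (X (a - 1) \<in> A \<and> X b \<in> A) \<and> \<not> (X a \<in> A \<and> X (b + 1) \<in> A)"
  shows "card (path_pendant_rstar n r v) \<le> card (path_pendant_rstar n r (map_pvert (rev_interval a b) v))"
proof (rule card_independent_rstar_le_inj)
  show "finite (pendant_vertices (path_vertices n))"
    by (simp add: finite_pendant_vertices path_vertices_def)
  show "inj_on ((`) (map_pvert (rev_interval a b))) (path_pendant_rstar n r v)"
    by (rule inj_on_image, rule inj_on_subset[OF pvert.inj_map[OF inj_rev_interval]]) simp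
  show "(`) (map_pvert (rev_interval a b)) ` path_pendant_rstar n r v
      \<subseteq> path_pendant_rstar n r (map_pvert (rev_interval a b) v)"
    using rev_interval_image_path_pendant_rstar assms by blast
qed

lemma card_path_pendant_rstar_reflect:
  assumes "1 \<le> i" "i \<le> n"
  shows "card (path_pendant_rstar n r (P i)) \<le> card (path_pendant_rstar n r (P (n + 1 - i)))"
proof -
  have "card (path_pendant_rstar n r (P i))
      \<le> card (path_pendant_rstar n r (map_pvert (rev_interval 1 n) (P i)))"
    by (rule card_path_pendant_rstar_le_rev_interval)
      (auto dest: path_pendant_rstar_X_range)
  then show ?thesis
    using assms by (simp add: rev_interval_def)
qed

lemma card_path_pendant_rstar_P1_le_P2:
  assumes "2 \<le> n"
  shows "card (path_pendant_rstar n r (P 1)) \<le> card (path_pendant_rstar n r (P 2))"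
proof -
  have "card (path_pendant_rstar n r (P 1))
      \<le> card (path_pendant_rstar n r (map_pvert (rev_interval 1 2) (P 1)))"
    using assms by (intro card_path_pendant_rstar_le_rev_interval)
      (auto dest: path_pendant_rstar_X_range path_pendant_rstar_P_excludes_X)
  then show ?thesis
    by (simp add: rev_interval_def numeral_2_eq_2)
qed

definition recentre_at_2 :: "nat \<Rightarrow> nat pvert set \<Rightarrow> nat pvert set" where
  "recentre_at_2 i A =
     (if X 2 \<in> A \<and> X (i + 1) \<in> A then map_pvert (rev_interval 1 (i + 1)) ` A
      else map_pvert (rev_interval 2 i) ` A)"

lemma X_mem_map_pvert_image: "inj \<pi> \<Longrightarrow> X (\<pi> x) \<in> map_pvert \<pi> ` A \<longleftrightarrow> X x \<in> A"
  using inj_image_mem_iff[OF pvert.inj_map, of \<pi> "X x" A] by simp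

lemma recentre_at_2_mem:
  assumes A: "A \<in> path_pendant_rstar n r (P i)" and "2 \<le> i" "i \<le> n"
  shows "recentre_at_2 i A \<in> path_pendant_rstar n r (P 2)"
proof (cases "X 2 \<in> A \<and> X (i + 1) \<in> A")
  case True
  then have "X 1 \<notin> A" "i + 1 \<le> n"
    using path_pendant_rstar_consecutive[OF A, of 1] path_pendant_rstar_X_range[OF A]
    by (auto simp: numeral_2_eq_2)
  moreover have "X 0 \<notin> A" "map_pvert (rev_interval 1 (i + 1)) (P i) = P 2"
    using path_pendant_rstar_X_range[OF A, of 0] \<open>2 \<le> i\<close> by (auto simp: rev_interval_def)
  ultimately show ?thesis
    using rev_interval_image_path_pendant_rstar[OF A, of 1 "i + 1"] True
    unfolding recentre_at_2_def by simp
next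
  case False
  then have "recentre_at_2 i A = map_pvert (rev_interval 2 i) ` A"
    by (simp only: recentre_at_2_def if_not_P if_False)
  moreover have "map_pvert (rev_interval 2 i) (P i) = P 2"
    using \<open>2 \<le> i\<close> by (simp add: rev_interval_def)
  ultimately show ?thesis
    using rev_interval_image_path_pendant_rstar[OF A, of 2 i] assms False
      path_pendant_rstar_P_excludes_X[OF A]
    by simp
qed

lemma inj_on_recentre_at_2:
  assumes "2 \<le> i"
  shows "inj_on (recentre_at_2 i) (path_pendant_rstar n r (P i))"
proof (rule inj_onI)
  let ?\<rho> = "map_pvert (rev_interval 2 i)" and ?\<sigma> = "map_pvert (rev_interval 1 (i + 1))"
  have \<rho>: "rev_interval 2 i 1 = 1" "rev_interval 2 i 2 = i"
    and \<sigma>: "rev_interval 1 (i + 1) (i + 1) = 1" "rev_interval 1 (i + 1) 2 = i"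
    using assms by (auto simp: rev_interval_def)
  have \<rho>_image: "\<not> (X 1 \<in> ?\<rho> ` A \<and> X i \<in> ?\<rho> ` A)" if "A \<in> path_pendant_rstar n r (P i)" for A
    using X_mem_map_pvert_image[OF inj_rev_interval, of 2 i 1 A]
      X_mem_map_pvert_image[OF inj_rev_interval, of 2 i 2 A]
      path_pendant_rstar_consecutive[OF that, of 1] \<rho> by (simp add: numeral_2_eq_2)
  have \<sigma>_image: "X 1 \<in> ?\<sigma> ` A \<and> X i \<in> ?\<sigma> ` A" if "X 2 \<in> A \<and> X (i + 1) \<in> A" for A
    using X_mem_map_pvert_image[OF inj_rev_interval, of 1 "i + 1" "i + 1" A]
      X_mem_map_pvert_image[OF inj_rev_interval, of 1 "i + 1" 2 A] that \<sigma> by simp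
  fix A B assume "A \<in> path_pendant_rstar n r (P i)" "B \<in> path_pendant_rstar n r (P i)"
    and "recentre_at_2 i A = recentre_at_2 i B"
  then show "A = B"
    using \<rho>_image \<sigma>_image
      inj_image_eq_iff[OF pvert.inj_map[OF inj_rev_interval], of 2 i A B]
      inj_image_eq_iff[OF pvert.inj_map[OF inj_rev_interval], of 1 "i + 1" A B]
    unfolding recentre_at_2_def by (smt (verit))
qed

lemma card_path_pendant_rstar_P_le_P2:
  assumes "2 \<le> i" "i \<le> n"
  shows "card (path_pendant_rstar n r (P i)) \<le> card (path_pendant_rstar n r (P 2))"
  using inj_on_recentre_at_2[OF assms(1)] recentre_at_2_mem[OF _ assms]
  by (intro card_independent_rstar_le_inj) (auto simp: finite_pendant_vertices path_vertices_def)

lemma card_path_pendant_rstar_le_P2: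
  assumes "2 \<le> n" and "v \<in> pendant_vertices (path_vertices n)"
  shows "card (path_pendant_rstar n r v) \<le> card (path_pendant_rstar n r (P 2))"
proof -
  obtain i where i: "v = X i \<or> v = P i" "1 \<le> i" "i \<le> n"
    using assms(2) by (cases v) (auto simp: path_vertices_def)
  have "card (path_pendant_rstar n r (P i)) \<le> card (path_pendant_rstar n r (P 2))"
  proof (cases "i = 1")
    case True
    then show ?thesis using card_path_pendant_rstar_P1_le_P2[OF assms(1)] by simp
  next
    case False
    then show ?thesis using card_path_pendant_rstar_P_le_P2 i(2,3) by simp
  qed
  moreover have "card (path_pendant_rstar n r (X i)) \<le> card (path_pendant_rstar n r (P i))"
    by (rule card_independent_rstar_X_le_P) (simp add: path_vertices_def)
  ultimately show ?thesis
    using i(1) by auto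
qed

theorem theorem5:
  fixes n r :: nat and v :: "nat pvert"
  assumes "n \<ge> 2" and "1 \<le> r" and "r \<le> n"
    and "v \<in> pendant_vertices (path_vertices n)"
  shows "card (independent_rstar (pendant_vertices (path_vertices n)) (pendant_adj path_adj) r v)
           \<le> card (independent_rstar (pendant_vertices (path_vertices n)) (pendant_adj path_adj) r (P 2))
       \<and> card (independent_rstar (pendant_vertices (path_vertices n)) (pendant_adj path_adj) r (P 2))
           = card (independent_rstar (pendant_vertices (path_vertices n)) (pendant_adj path_adj) r (P (n - 1)))"
proof
  show "card (path_pendant_rstar n r v) \<le> card (path_pendant_rstar n r (P 2))"
    using assms(1,4) by (rule card_path_pendant_rstar_le_P2)
  have "n + 1 - 2 = n - 1" "n + 1 - (n - 1) = 2"
    using assms(1) by arith+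
  then show "card (path_pendant_rstar n r (P 2)) = card (path_pendant_rstar n r (P (n - 1)))"
    using card_path_pendant_rstar_reflect[of 2 n r] card_path_pendant_rstar_reflect[of "n - 1" n r]
      assms(1) by (simp add: antisym)
qed

end
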